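(* Fix constants $\lambda>0$ and $\epsilon\in(0,1)$. Suppose that for each $n$ each of $n$ items is defective independently with probability $p=\frac{\lambda}{\log n}$ (i.i.d. prior). Then there exists $n_0$ such that for all $n>n_0$, any nonadaptive test scheme (test design together with any decoding method) that uses $T$ tests with $$T\le (1-\epsilon)\frac{\lambda}{\lambda+\log^2 2}\,n$$ to identify the set of defective items has error probability $1-o(1)$ as $n\to\infty$.
   Context: $\log$ denotes the natural logarithm. Nonadaptive group testing: a test is a subset of items, and its outcome is positive iff it contains at least one defective item (the logical OR of the defectivity indicators of its items). All tests are fixed before any outcomes are seen; a decoding method maps the vector of outcomes to an estimate of the defective set, and an error occurs when this estimate differs from the true defective set. *)

theory Defs
  imports Complex_Main
begin

definition iid_prior :: "real \<Rightarrow> nat \<Rightarrow> nat set \<Rightarrow> real" where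
  "iid_prior p n D = p ^ card D * (1 - p) ^ (n - card D)"

definition test_outcomes :: "nat set list \<Rightarrow> nat set \<Rightarrow> bool list" where
  "test_outcomes tests D = map (\<lambda>t. t \<inter> D \<noteq> {}) tests"

definition success_prob :: "real \<Rightarrow> nat \<Rightarrow> nat set list \<Rightarrow> (bool list \<Rightarrow> nat set) \<Rightarrow> real" where
  "success_prob p n tests dec =
     (\<Sum>D\<in>Pow {0..<n}. if dec (test_outcomes tests D) = D then iid_prior p n D else 0)"

definition error_prob :: "real \<Rightarrow> nat \<Rightarrow> nat set list \<Rightarrow> (bool list \<Rightarrow> nat set) \<Rightarrow> real" where
  "error_prob p n tests dec = 1 - success_prob p n tests dec"

end

theory Submission
  imports Defs "HOL-Real_Asymp.Real_Asymp"
begin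

(* A defective item is disguised if each of its tests contains another defective item. Deleting
   a disguised item changes no outcome, so a decoder that is right on D is wrong on D minus that
   item; hence every decoder succeeds with probability at most P(no item is disguised) + p/(1-p).

   To find disguised items, first give up a small set H of items so that every other item lies in
   at most Delta short tests, i.e. tests with at most L = O(log^2 n) items outside H. A long test
   leaves some item as its only defective with probability O(log n / n^2). Count the items whose
   short tests all contain another defective: by Harris' inequality and Jensen's inequality the
   mean of this count is at least p * |R| * exp(-(cost of the short tests) / |R|), where each test
   costs at most (ln 2)^2/p - ln p and R is the set of items not isolated by a short test. With
   fewer than (1 - eps) * lam / (lam + (ln 2)^2) * n tests the mean grows like n^(eps/2) up to
   logarithmic factors, and since the indicators have dependency neighbourhoods of
   polylogarithmic size, the second moment method shows the count is positive with probability
   1 - o(1). *)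

section \<open>Independent Bernoulli subsets\<close>

definition iid_weight :: "real \<Rightarrow> nat set \<Rightarrow> nat set \<Rightarrow> real" where
  "iid_weight p X D = p ^ card D * (1 - p) ^ (card X - card D)"

definition iid_expect :: "real \<Rightarrow> nat set \<Rightarrow> (nat set \<Rightarrow> real) \<Rightarrow> real" where
  "iid_expect p X f = (\<Sum>D\<in>Pow X. iid_weight p X D * f D)"

lemma iid_weight_nonneg: "0 \<le> p \<Longrightarrow> p \<le> 1 \<Longrightarrow> 0 \<le> iid_weight p X D"
  by (simp add: iid_weight_def)

lemma iid_weight_Un:
  assumes "finite X" "finite Y" "X \<inter> Y = {}" "A \<subseteq> X" "B \<subseteq> Y"
  shows "iid_weight p (X \<union> Y) (A \<union> B) = iid_weight p X A * iid_weight p Y B"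
proof -
  have "finite A" "finite B" "A \<inter> B = {}" using assms finite_subset by blast+
  then have card_AB: "card (A \<union> B) = card A + card B" by (simp add: card_Un_disjoint)
  moreover have "card (X \<union> Y) = card X + card Y" using assms(1-3) by (simp add: card_Un_disjoint)
  moreover have "card A \<le> card X" "card B \<le> card Y" using assms by (simp_all add: card_mono)
  ultimately have card_diff:
    "card (X \<union> Y) - (card A + card B) = (card X - card A) + (card Y - card B)"
    by simp
  show ?thesis unfolding iid_weight_def card_AB card_diff power_add by (simp only: mult_ac)
qed

lemma iid_expect_Un:
  assumes "finite X" "finite Y" "X \<inter> Y = {}"
  shows "iid_expect p (X \<union> Y) F = iid_expect p X (\<lambda>A. iid_expect p Y (\<lambda>B. F (A \<union> B)))"
proof -
  let ?join = "\<lambda>(A, B). A \<union> B"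
  have blocks: "A = (A \<union> B) \<inter> X" "B = (A \<union> B) \<inter> Y" if "A \<subseteq> X" "B \<subseteq> Y" for A B
    using that assms(3) by auto
  have inj: "inj_on ?join (Pow X \<times> Pow Y)"
  proof (rule inj_onI)
    fix u v assume "u \<in> Pow X \<times> Pow Y" "v \<in> Pow X \<times> Pow Y" "?join u = ?join v"
    then show "u = v" using blocks by (cases u, cases v) (metis PowD SigmaE2 case_prod_conv)
  qed
  have img: "?join ` (Pow X \<times> Pow Y) = Pow (X \<union> Y)"
  proof
    show "Pow (X \<union> Y) \<subseteq> ?join ` (Pow X \<times> Pow Y)"
    proof
      fix D assume "D \<in> Pow (X \<union> Y)"
      then have "D = ?join (D \<inter> X, D \<inter> Y)" "(D \<inter> X, D \<inter> Y) \<in> Pow X \<times> Pow Y" by auto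
      then show "D \<in> ?join ` (Pow X \<times> Pow Y)" by blast
    qed
  qed auto
  have "iid_expect p X (\<lambda>A. iid_expect p Y (\<lambda>B. F (A \<union> B)))
      = (\<Sum>(A, B)\<in>Pow X \<times> Pow Y. iid_weight p (X \<union> Y) (A \<union> B) * F (A \<union> B))"
    unfolding iid_expect_def sum_distrib_left sum.cartesian_product
  proof (rule sum.cong)
    fix u assume "u \<in> Pow X \<times> Pow Y"
    then show "(case u of (A, B) \<Rightarrow> iid_weight p X A * (iid_weight p Y B * F (A \<union> B)))
      = (case u of (A, B) \<Rightarrow> iid_weight p (X \<union> Y) (A \<union> B) * F (A \<union> B))"
      by (auto simp: iid_weight_Un assms)
  qed simp
  also have "\<dots> = iid_expect p (X \<union> Y) F"
    unfolding iid_expect_def img[symmetric] sum.reindex[OF inj] by (simp add: case_prod_beta)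
  finally show ?thesis ..
qed

lemma iid_expect_singleton: "iid_expect p {x} f = (1 - p) * f {} + p * f {x}"
proof -
  have "Pow {x} = {{}, {x}}" by blast
  then show ?thesis by (simp add: iid_expect_def iid_weight_def)
qed

lemma iid_expect_insert:
  assumes "finite X" "x \<notin> X"
  shows "iid_expect p (insert x X) f
    = (1 - p) * iid_expect p X f + p * iid_expect p X (\<lambda>D. f (insert x D))"
  using iid_expect_Un[of "{x}" X p f] assms by (simp add: iid_expect_singleton)

lemma iid_expect_cong: "(\<And>D. D \<subseteq> X \<Longrightarrow> f D = g D) \<Longrightarrow> iid_expect p X f = iid_expect p X g"
  unfolding iid_expect_def by (rule sum.cong) auto

lemma iid_expect_add: "iid_expect p X (\<lambda>D. f D + g D) = iid_expect p X f + iid_expect p X g"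
  unfolding iid_expect_def by (simp add: distrib_left sum.distrib)

lemma iid_expect_diff: "iid_expect p X (\<lambda>D. f D - g D) = iid_expect p X f - iid_expect p X g"
  unfolding iid_expect_def by (simp add: right_diff_distrib sum_subtractf)

lemma iid_expect_cmult: "iid_expect p X (\<lambda>D. c * f D) = c * iid_expect p X f"
  unfolding iid_expect_def by (simp add: sum_distrib_left mult_ac)

lemma iid_expect_multc: "iid_expect p X (\<lambda>D. f D * c) = iid_expect p X f * c"
  unfolding iid_expect_def sum_distrib_right by (simp add: mult_ac)

lemma iid_expect_sum: "iid_expect p X (\<lambda>D. \<Sum>i\<in>I. f i D) = (\<Sum>i\<in>I. iid_expect p X (f i))"
  unfolding iid_expect_def by (simp add: sum_distrib_left sum.swap[where A = I])

lemma iid_expect_mono: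
  "0 \<le> p \<Longrightarrow> p \<le> 1 \<Longrightarrow> (\<And>D. D \<subseteq> X \<Longrightarrow> f D \<le> g D) \<Longrightarrow> iid_expect p X f \<le> iid_expect p X g"
  unfolding iid_expect_def by (rule sum_mono) (auto intro!: mult_left_mono iid_weight_nonneg)

lemma iid_expect_nonneg:
  "0 \<le> p \<Longrightarrow> p \<le> 1 \<Longrightarrow> (\<And>D. D \<subseteq> X \<Longrightarrow> 0 \<le> f D) \<Longrightarrow> 0 \<le> iid_expect p X f"
  unfolding iid_expect_def by (rule sum_nonneg) (auto intro!: mult_nonneg_nonneg iid_weight_nonneg)

lemma iid_expect_const: "finite X \<Longrightarrow> iid_expect p X (\<lambda>_. c) = c"
proof (induction X rule: finite_induct)
  case empty
  then show ?case by (simp add: iid_expect_def iid_weight_def)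
next
  case (insert x X)
  then show ?case by (simp add: iid_expect_insert algebra_simps)
qed

lemma iid_expect_mult_blocks:
  assumes "finite X" "finite Y" "X \<inter> Y = {}"
  shows "iid_expect p (X \<union> Y) (\<lambda>D. f (D \<inter> X) * g (D \<inter> Y)) = iid_expect p X f * iid_expect p Y g"
proof -
  have "iid_expect p (X \<union> Y) (\<lambda>D. f (D \<inter> X) * g (D \<inter> Y))
      = iid_expect p X (\<lambda>A. iid_expect p Y (\<lambda>B. f ((A \<union> B) \<inter> X) * g ((A \<union> B) \<inter> Y)))"
    by (rule iid_expect_Un[OF assms])
  also have "\<dots> = iid_expect p X (\<lambda>A. iid_expect p Y (\<lambda>B. f A * g B))"
  proof (intro iid_expect_cong)
    fix A B assume "A \<subseteq> X" "B \<subseteq> Y"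
    then have "(A \<union> B) \<inter> X = A" "(A \<union> B) \<inter> Y = B" using assms(3) by auto
    then show "f ((A \<union> B) \<inter> X) * g ((A \<union> B) \<inter> Y) = f A * g B" by simp
  qed
  also have "\<dots> = iid_expect p X f * iid_expect p Y g"
    by (simp add: iid_expect_cmult iid_expect_multc)
  finally show ?thesis .
qed

lemma iid_expect_local:
  assumes "finite V" "X \<subseteq> V" "\<And>D. D \<subseteq> V \<Longrightarrow> f D = f (D \<inter> X)"
  shows "iid_expect p V f = iid_expect p X f"
proof -
  have V: "X \<union> (V - X) = V" and fin: "finite X" "finite (V - X)" "X \<inter> (V - X) = {}"
    using assms(1,2) finite_subset by auto
  have "iid_expect p V f = iid_expect p (X \<union> (V - X)) (\<lambda>D. f (D \<inter> X) * (\<lambda>_. 1) (D \<inter> (V - X)))"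
    unfolding V using assms(3) by (intro iid_expect_cong) simp
  also have "\<dots> = iid_expect p X f"
    using iid_expect_mult_blocks[OF fin, of p f "\<lambda>_. 1"] by (simp add: iid_expect_const fin)
  finally show ?thesis .
qed

lemma iid_expect_mult_indep:
  assumes "finite V" "X \<subseteq> V" "Y \<subseteq> V" "X \<inter> Y = {}"
    and f: "\<And>D. D \<subseteq> V \<Longrightarrow> f D = f (D \<inter> X)"
    and g: "\<And>D. D \<subseteq> V \<Longrightarrow> g D = g (D \<inter> Y)"
  shows "iid_expect p V (\<lambda>D. f D * g D) = iid_expect p V f * iid_expect p V g"
proof -
  have fin: "finite X" "finite Y" using assms(1-3) finite_subset by auto
  have blocks: "D \<inter> (X \<union> Y) \<inter> X = D \<inter> X" "D \<inter> (X \<union> Y) \<inter> Y = D \<inter> Y" for D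
    by auto
  have "iid_expect p V (\<lambda>D. f D * g D) = iid_expect p V (\<lambda>D. f (D \<inter> X) * g (D \<inter> Y))"
    using f g by (intro iid_expect_cong) simp
  also have "\<dots> = iid_expect p (X \<union> Y) (\<lambda>D. f (D \<inter> X) * g (D \<inter> Y))"
    by (rule iid_expect_local) (use assms(1-3) blocks in auto)
  also have "\<dots> = iid_expect p X f * iid_expect p Y g"
    by (rule iid_expect_mult_blocks[OF fin assms(4)])
  also have "\<dots> = iid_expect p V f * iid_expect p V g"
    using iid_expect_local[of V X f p, OF assms(1,2) f] iid_expect_local[of V Y g p, OF assms(1,3) g]
    by simp
  finally show ?thesis .
qed

lemma iid_expect_avoid:
  assumes "finite V" "A \<subseteq> V"
  shows "iid_expect p V (\<lambda>D. if D \<inter> A = {} then 1 else 0) = (1 - p) ^ card A"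
proof -
  have "iid_expect p V (\<lambda>D. if D \<inter> A = {} then 1 else 0)
      = iid_expect p A (\<lambda>D. if D \<inter> A = {} then 1 else 0)"
    by (rule iid_expect_local) (use assms in \<open>auto simp: Int_assoc\<close>)
  also have "\<dots> = (\<Sum>D\<in>Pow A. if D = {} then iid_weight p A D else 0)"
    unfolding iid_expect_def by (rule sum.cong) auto
  also have "\<dots> = (1 - p) ^ card A"
    using assms finite_subset by (subst sum.delta) (auto simp: iid_weight_def)
  finally show ?thesis .
qed

lemma iid_expect_member:
  assumes "finite V" "i \<in> V"
  shows "iid_expect p V (\<lambda>D. if i \<in> D then 1 else 0) = p"
proof -
  have "iid_expect p V (\<lambda>D. if i \<in> D then 1 else 0) = iid_expect p {i} (\<lambda>D. if i \<in> D then 1 else 0)"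
    by (rule iid_expect_local) (use assms in auto)
  then show ?thesis by (simp add: iid_expect_singleton)
qed

lemma mono_on_Pow_insert:
  assumes h: "mono_on (Pow (insert x X)) h"
  shows "mono_on (Pow X) h" "mono_on (Pow X) (\<lambda>D. h (insert x D))"
    and "D \<subseteq> X \<Longrightarrow> h D \<le> h (insert x D)"
proof -
  show "mono_on (Pow X) h"
    using h by (rule mono_on_subset) auto
  show "mono_on (Pow X) (\<lambda>D. h (insert x D))"
    by (rule mono_onI, rule mono_onD[OF h]) auto
  show "D \<subseteq> X \<Longrightarrow> h D \<le> h (insert x D)"
    by (rule mono_onD[OF h]) auto
qed

lemma harris_inequality:
  assumes "finite X" "0 \<le> p" "p \<le> 1" "mono_on (Pow X) f" "mono_on (Pow X) g"
  shows "iid_expect p X f * iid_expect p X g \<le> iid_expect p X (\<lambda>D. f D * g D)"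
  using assms
proof (induction X arbitrary: f g rule: finite_induct)
  case empty
  then show ?case by (simp add: iid_expect_def iid_weight_def)
next
  case (insert x X)
  let ?f1 = "\<lambda>D. f (insert x D)" and ?g1 = "\<lambda>D. g (insert x D)"
  let ?E = "iid_expect p X"
  have f_le: "?E f \<le> ?E ?f1"
    using insert.prems(1,2) mono_on_Pow_insert(3)[OF insert.prems(3)] by (intro iid_expect_mono) auto
  have g_le: "?E g \<le> ?E ?g1"
    using insert.prems(1,2) mono_on_Pow_insert(3)[OF insert.prems(4)] by (intro iid_expect_mono) auto
  note IH = insert.IH[OF insert.prems(1,2)]
  have "iid_expect p (insert x X) f * iid_expect p (insert x X) g
     = ((1 - p) * ?E f + p * ?E ?f1) * ((1 - p) * ?E g + p * ?E ?g1)"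
    using insert.hyps by (simp add: iid_expect_insert)
  also have "\<dots> = (1 - p) * (?E f * ?E g) + p * (?E ?f1 * ?E ?g1)
      - p * (1 - p) * ((?E ?f1 - ?E f) * (?E ?g1 - ?E g))"
    by (simp add: algebra_simps)
  also have "\<dots> \<le> (1 - p) * (?E f * ?E g) + p * (?E ?f1 * ?E ?g1)"
    using f_le g_le insert.prems(1,2) by simp
  also have "\<dots> \<le> (1 - p) * ?E (\<lambda>D. f D * g D) + p * ?E (\<lambda>D. ?f1 D * ?g1 D)"
    using IH[OF mono_on_Pow_insert(1)[OF insert.prems(3)] mono_on_Pow_insert(1)[OF insert.prems(4)]]
      IH[OF mono_on_Pow_insert(2)[OF insert.prems(3)] mono_on_Pow_insert(2)[OF insert.prems(4)]]
      insert.prems(1,2)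
    by (intro add_mono mult_left_mono) auto
  also have "\<dots> = iid_expect p (insert x X) (\<lambda>D. f D * g D)"
    using insert.hyps by (simp add: iid_expect_insert)
  finally show ?case .
qed

lemma iid_expect_prod_hits_ge:
  assumes "finite X" "0 \<le> p" "p \<le> 1" "finite S" "\<And>t. t \<in> S \<Longrightarrow> A t \<subseteq> X"
  shows "(\<Prod>t\<in>S. 1 - (1 - p) ^ card (A t)) \<le> iid_expect p X (\<lambda>D. \<Prod>t\<in>S. if D \<inter> A t = {} then 0 else 1)"
  using assms(4,5)
proof (induction S rule: finite_induct)
  case empty
  then show ?case using assms(1) by (simp add: iid_expect_const)
next
  case (insert s S)
  let ?hit = "\<lambda>D. if D \<inter> A s = {} then 0 else (1::real)"
  let ?hit_all = "\<lambda>D. \<Prod>t\<in>S. if D \<inter> A t = {} then 0 else (1::real)"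
  have "iid_expect p X ?hit = iid_expect p X (\<lambda>D. 1 - (if D \<inter> A s = {} then 1 else 0))"
    by (rule iid_expect_cong) auto
  also have "\<dots> = 1 - (1 - p) ^ card (A s)"
    using iid_expect_avoid[OF assms(1) insert.prems[of s]]
    by (simp add: iid_expect_diff iid_expect_const assms(1))
  finally have hit: "iid_expect p X ?hit = 1 - (1 - p) ^ card (A s)" .
  have hit_mono: "(if D \<inter> B = {} then 0 else 1::real) \<le> (if D' \<inter> B = {} then 0 else 1)"
    if "D \<subseteq> D'" for D D' B
  proof -
    have "D' \<inter> B = {} \<Longrightarrow> D \<inter> B = {}" using that by blast
    then show ?thesis by simp
  qed
  have mono: "mono_on (Pow X) ?hit" "mono_on (Pow X) ?hit_all"
    by (auto intro!: mono_onI prod_mono hit_mono)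
  have "(\<Prod>t\<in>insert s S. 1 - (1 - p) ^ card (A t))
      = (1 - (1 - p) ^ card (A s)) * (\<Prod>t\<in>S. 1 - (1 - p) ^ card (A t))"
    using insert.hyps by simp
  also have "\<dots> \<le> iid_expect p X ?hit * iid_expect p X ?hit_all"
    unfolding hit using insert.IH insert.prems assms(2,3)
    by (intro mult_left_mono) (auto simp: power_le_one)
  also have "\<dots> \<le> iid_expect p X (\<lambda>D. ?hit D * ?hit_all D)"
    by (rule harris_inequality[OF assms(1-3) mono])
  also have "\<dots> = iid_expect p X (\<lambda>D. \<Prod>t\<in>insert s S. if D \<inter> A t = {} then 0 else 1)"
    by (rule iid_expect_cong) (use insert.hyps in simp)
  finally show ?case .
qed

lemma prob_eq_0_mult_sq_le:
  assumes "finite V" "0 \<le> p" "p \<le> 1"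
  shows "iid_expect p V (\<lambda>D. if f D = 0 then 1 else 0) * (iid_expect p V f)\<^sup>2
    \<le> iid_expect p V (\<lambda>D. (f D)\<^sup>2) - (iid_expect p V f)\<^sup>2"
proof -
  let ?m = "iid_expect p V f"
  have "iid_expect p V (\<lambda>D. if f D = 0 then 1 else 0) * ?m\<^sup>2
      = iid_expect p V (\<lambda>D. (if f D = 0 then 1 else 0) * ?m\<^sup>2)"
    by (rule iid_expect_multc[symmetric])
  also have "\<dots> \<le> iid_expect p V (\<lambda>D. (f D - ?m)\<^sup>2)"
    using assms(2,3) by (intro iid_expect_mono) auto
  also have "iid_expect p V (\<lambda>D. (f D - ?m)\<^sup>2)
      = iid_expect p V (\<lambda>D. ((f D)\<^sup>2 - (2 * ?m) * f D) + ?m\<^sup>2)"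
    by (rule iid_expect_cong) (simp add: power2_eq_square algebra_simps)
  also have "\<dots> = iid_expect p V (\<lambda>D. (f D)\<^sup>2) - ?m\<^sup>2"
    by (simp add: iid_expect_add iid_expect_diff iid_expect_cmult iid_expect_const assms(1)
        power2_eq_square)
  finally show ?thesis .
qed

lemma second_moment_le:
  assumes "finite V" "0 \<le> p" "p \<le> 1" "finite I"
    and X_range: "\<And>i D. 0 \<le> X i D \<and> X i D \<le> 1"
    and dep: "\<And>i. i \<in> I \<Longrightarrow> dep i \<subseteq> I \<and> card (dep i) \<le> M"
    and indep: "\<And>i j. i \<in> I \<Longrightarrow> j \<in> I - dep i
      \<Longrightarrow> iid_expect p V (\<lambda>D. X i D * X j D) = iid_expect p V (X i) * iid_expect p V (X j)"
  defines "m \<equiv> iid_expect p V (\<lambda>D. \<Sum>i\<in>I. X i D)"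
  shows "iid_expect p V (\<lambda>D. (\<Sum>i\<in>I. X i D)\<^sup>2) \<le> m\<^sup>2 + M * m"
proof -
  let ?E = "iid_expect p V"
  have m_eq: "m = (\<Sum>j\<in>I. ?E (X j))" unfolding m_def by (rule iid_expect_sum)
  have E_nonneg: "0 \<le> ?E (X j)" for j using assms(2,3) X_range by (intro iid_expect_nonneg) auto
  have row: "(\<Sum>j\<in>I. ?E (\<lambda>D. X i D * X j D)) \<le> (M + m) * ?E (X i)" if i: "i \<in> I" for i
  proof -
    have "(\<Sum>j\<in>I. ?E (\<lambda>D. X i D * X j D))
        = (\<Sum>j\<in>dep i. ?E (\<lambda>D. X i D * X j D)) + (\<Sum>j\<in>I - dep i. ?E (\<lambda>D. X i D * X j D))"
      using dep[OF i] assms(4) sum.subset_diff[of "dep i" I] by (simp add: add.commute)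
    also have "(\<Sum>j\<in>dep i. ?E (\<lambda>D. X i D * X j D)) \<le> (\<Sum>j\<in>dep i. ?E (X i))"
      using assms(2,3) X_range by (intro sum_mono iid_expect_mono) (auto intro: mult_left_le)
    also have "\<dots> \<le> M * ?E (X i)"
      using dep[OF i] E_nonneg by (simp add: mult_right_mono)
    also have "(\<Sum>j\<in>I - dep i. ?E (\<lambda>D. X i D * X j D)) = (\<Sum>j\<in>I - dep i. ?E (X i) * ?E (X j))"
      using indep[OF i] by simp
    also have "\<dots> \<le> (\<Sum>j\<in>I. ?E (X i) * ?E (X j))"
      using assms(4) E_nonneg by (intro sum_mono2) auto
    also have "\<dots> = ?E (X i) * m" unfolding m_eq by (simp add: sum_distrib_left)
    finally show ?thesis by (simp add: algebra_simps)
  qed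
  have "?E (\<lambda>D. (\<Sum>i\<in>I. X i D)\<^sup>2) = (\<Sum>i\<in>I. \<Sum>j\<in>I. ?E (\<lambda>D. X i D * X j D))"
    unfolding power2_eq_square sum_product by (simp add: iid_expect_sum)
  also have "\<dots> \<le> (\<Sum>i\<in>I. (M + m) * ?E (X i))"
    by (rule sum_mono) (rule row)
  also have "\<dots> = (M + m) * m" by (simp add: m_eq sum_distrib_left)
  finally show ?thesis by (simp add: power2_eq_square algebra_simps)
qed

lemma prob_sum_eq_0_le:
  assumes "finite V" "0 \<le> p" "p \<le> 1" "finite I"
    and X_range: "\<And>i D. 0 \<le> X i D \<and> X i D \<le> 1"
    and dep: "\<And>i. i \<in> I \<Longrightarrow> dep i \<subseteq> I \<and> card (dep i) \<le> M"
    and indep: "\<And>i j. i \<in> I \<Longrightarrow> j \<in> I - dep i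
      \<Longrightarrow> iid_expect p V (\<lambda>D. X i D * X j D) = iid_expect p V (X i) * iid_expect p V (X j)"
    and m_pos: "0 < iid_expect p V (\<lambda>D. \<Sum>i\<in>I. X i D)"
  shows "iid_expect p V (\<lambda>D. if (\<Sum>i\<in>I. X i D) = 0 then 1 else 0)
    \<le> M / iid_expect p V (\<lambda>D. \<Sum>i\<in>I. X i D)"
proof -
  let ?m = "iid_expect p V (\<lambda>D. \<Sum>i\<in>I. X i D)"
  let ?q = "iid_expect p V (\<lambda>D. if (\<Sum>i\<in>I. X i D) = 0 then 1 else 0)"
  have "?q * ?m\<^sup>2 \<le> M * ?m"
    using prob_eq_0_mult_sq_le[OF assms(1-3), of "\<lambda>D. \<Sum>i\<in>I. X i D"]
      second_moment_le[of V p I X dep M, OF assms(1-4) X_range dep indep] by simp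
  then have "?m * (?q * ?m) \<le> ?m * M"
    by (simp add: power2_eq_square mult_ac)
  then show ?thesis
    using m_pos by (simp add: mult_le_cancel_left_pos pos_le_divide_eq)
qed

section \<open>Disguised items\<close>

definition disguised :: "nat set list \<Rightarrow> nat set \<Rightarrow> nat \<Rightarrow> bool" where
  "disguised tests D i \<longleftrightarrow> i \<in> D \<and> (\<forall>t\<in>set tests. i \<in> t \<longrightarrow> (\<exists>j\<in>t. j \<noteq> i \<and> j \<in> D))"

lemma success_prob_eq_iid_expect:
  "success_prob p n tests dec
    = iid_expect p {0..<n} (\<lambda>D. if dec (test_outcomes tests D) = D then 1 else 0)"
  unfolding success_prob_def iid_expect_def iid_prior_def iid_weight_def by (rule sum.cong) auto

lemma test_outcomes_remove_disguised:
  assumes "disguised tests D i"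
  shows "test_outcomes tests (D - {i}) = test_outcomes tests D"
  unfolding test_outcomes_def
proof (rule map_cong[OF refl])
  fix t assume "t \<in> set tests"
  then have "i \<in> t \<Longrightarrow> \<exists>j\<in>t. j \<noteq> i \<and> j \<in> D" using assms unfolding disguised_def by blast
  then show "(t \<inter> (D - {i}) \<noteq> {}) = (t \<inter> D \<noteq> {})" by blast
qed

lemma iid_weight_remove:
  assumes "finite V" "D \<subseteq> V" "i \<in> D" "p < 1"
  shows "iid_weight p V D = p / (1 - p) * iid_weight p V (D - {i})"
proof -
  have "finite D" using assms(1,2) finite_subset by blast
  then have card_D: "card D = Suc (card (D - {i}))" using assms(3) by (metis card_Suc_Diff1)
  moreover have "card D \<le> card V" using assms(1,2) by (simp add: card_mono)
  ultimately have "card V - card (D - {i}) = Suc (card V - card D)" by simp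
  then show ?thesis unfolding iid_weight_def using assms(4) by (simp add: card_D field_simps)
qed

text \<open>Deleting a disguised item is injective on correctly decoded sets and scales the prior weight
  by \<open>(1 - p) / p\<close>.\<close>
lemma prior_decoded_with_disguised_le:
  assumes "0 < p" "p < 1"
  shows "(\<Sum>D\<in>{D \<in> Pow {0..<n}. dec (test_outcomes tests D) = D \<and> (\<exists>i. disguised tests D i)}.
            iid_weight p {0..<n} D) \<le> p / (1 - p)"
    (is "(\<Sum>D\<in>?S. _) \<le> _")
proof -
  let ?V = "{0..<n}"
  define drop where "drop D = D - {SOME i. disguised tests D i}" for D
  have S_sub: "?S \<subseteq> Pow ?V" by auto
  have drop_disguised: "disguised tests D (SOME i. disguised tests D i)" if "D \<in> ?S" for D
  proof -
    from that have "\<exists>i. disguised tests D i" by blast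
    then show ?thesis by (rule someI_ex)
  qed
  have drop_outcomes: "test_outcomes tests (drop D) = test_outcomes tests D" if "D \<in> ?S" for D
    unfolding drop_def by (rule test_outcomes_remove_disguised[OF drop_disguised[OF that]])
  have inj: "inj_on drop ?S"
  proof (rule inj_onI)
    fix D1 D2 assume D: "D1 \<in> ?S" "D2 \<in> ?S" "drop D1 = drop D2"
    have "D1 = dec (test_outcomes tests D1)" using D(1) by simp
    also have "\<dots> = dec (test_outcomes tests D2)"
      using drop_outcomes[OF D(1)] drop_outcomes[OF D(2)] D(3) by simp
    also have "\<dots> = D2" using D(2) by simp
    finally show "D1 = D2" .
  qed
  have "(\<Sum>D\<in>?S. iid_weight p ?V D) = (\<Sum>D\<in>?S. p / (1 - p) * iid_weight p ?V (drop D))"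
  proof (rule sum.cong[OF refl])
    fix D assume D: "D \<in> ?S"
    then have "(SOME i. disguised tests D i) \<in> D" using drop_disguised unfolding disguised_def by blast
    then show "iid_weight p ?V D = p / (1 - p) * iid_weight p ?V (drop D)"
      unfolding drop_def using D assms(2) by (intro iid_weight_remove) auto
  qed
  also have "\<dots> = p / (1 - p) * (\<Sum>D\<in>drop ` ?S. iid_weight p ?V D)"
    unfolding sum_distrib_left sum.reindex[OF inj] by simp
  also have "\<dots> \<le> p / (1 - p) * (\<Sum>D\<in>Pow ?V. iid_weight p ?V D)"
    using assms by (intro mult_left_mono sum_mono2) (auto simp: drop_def iid_weight_nonneg)
  also have "(\<Sum>D\<in>Pow ?V. iid_weight p ?V D) = 1"
    using iid_expect_const[of ?V p 1] unfolding iid_expect_def by simp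
  finally show ?thesis by simp
qed

lemma success_prob_le_no_disguised:
  assumes "0 < p" "p < 1"
  shows "success_prob p n tests dec
    \<le> iid_expect p {0..<n} (\<lambda>D. if \<exists>i. disguised tests D i then 0 else 1) + p / (1 - p)"
proof -
  let ?V = "{0..<n}"
  let ?decoded = "\<lambda>D. dec (test_outcomes tests D) = D"
  let ?S = "{D \<in> Pow ?V. ?decoded D \<and> (\<exists>i. disguised tests D i)}"
  have "iid_expect p ?V (\<lambda>D. if D \<in> ?S then 1 else 0)
      = (\<Sum>D\<in>?S. iid_weight p ?V D * (if D \<in> ?S then 1 else 0))"
    unfolding iid_expect_def by (rule sum.mono_neutral_right) auto
  then have S_prior: "iid_expect p ?V (\<lambda>D. if D \<in> ?S then 1 else 0) = (\<Sum>D\<in>?S. iid_weight p ?V D)"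
    by simp
  have "success_prob p n tests dec
      = iid_expect p ?V (\<lambda>D. if ?decoded D \<and> \<not> (\<exists>i. disguised tests D i) then 1 else 0)
        + iid_expect p ?V (\<lambda>D. if D \<in> ?S then 1 else 0)"
    unfolding success_prob_eq_iid_expect iid_expect_add[symmetric] by (rule iid_expect_cong) auto
  also have "\<dots> \<le> iid_expect p ?V (\<lambda>D. if \<exists>i. disguised tests D i then 0 else 1) + p / (1 - p)"
    unfolding S_prior using assms
    by (intro add_mono iid_expect_mono prior_decoded_with_disguised_le) auto
  finally show ?thesis .
qed

lemma ln_div_one_minus_mono:
  fixes a b :: real
  assumes "0 < a" "a \<le> b" "b < 1"
  shows "ln a / (1 - a) \<le> ln b / (1 - b)"
proof (rule DERIV_nonneg_imp_increasing_open[OF assms(2)])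
  fix x assume x: "a < x" "x < b"
  then have x0: "0 < x" "x < 1" using assms by auto
  have "DERIV (\<lambda>y. ln y / (1 - y)) x :> ((1 / x) * (1 - x) - ln x * (-1)) / (1 - x)^2"
    using x0 by (auto intro!: derivative_eq_intros simp: power2_eq_square)
  moreover have "0 \<le> ((1 / x) * (1 - x) - ln x * (-1)) / (1 - x)^2"
  proof -
    have "ln (1 / x) \<le> 1 / x - 1" using ln_le_minus_one[of "1/x"] x0 by simp
    then have "0 \<le> (1 / x) * (1 - x) + ln x" using x0 by (simp add: ln_div field_simps)
    then show ?thesis by simp
  qed
  ultimately show "\<exists>y. DERIV (\<lambda>y. ln y / (1 - y)) x :> y \<and> 0 \<le> y" by blast
next
  show "continuous_on {a..b} (\<lambda>y. ln y / (1 - y))"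
    using assms by (intro continuous_intros) auto
qed

lemma mult_ln_le_reflected:
  fixes x :: real
  assumes "0 < x" "x \<le> 1/2"
  shows "x * ln x \<le> (1 - x) * ln (1 - x)"
proof -
  have "ln x / (1 - x) \<le> ln (1 - x) / (1 - (1 - x))"
    by (rule ln_div_one_minus_mono) (use assms in auto)
  then have "ln x / (1 - x) \<le> ln (1 - x) / x" by simp
  then show ?thesis using assms by (simp add: field_simps)
qed

lemma ln_mult_ln_one_minus_le_half:
  fixes x :: real
  assumes "0 < x" "x \<le> 1/2"
  shows "ln x * ln (1 - x) \<le> (ln 2)^2"
proof -
  have "ln x * ln (1 - x) \<le> ln (1/2) * ln (1 - 1/2)"
  proof (rule DERIV_nonneg_imp_increasing_open[OF assms(2)])
    fix y assume y: "x < y" "y < 1/2"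
    then have y0: "0 < y" "y < 1" using assms by auto
    have "DERIV (\<lambda>y. ln y * ln (1 - y)) y :> (1 / y) * ln (1 - y) + ln y * (- 1 / (1 - y))"
      using y0 by (auto intro!: derivative_eq_intros)
    moreover have "0 \<le> (1 / y) * ln (1 - y) + ln y * (- 1 / (1 - y))"
    proof -
      have "y * ln y \<le> (1 - y) * ln (1 - y)" by (rule mult_ln_le_reflected) (use y0 y in auto)
      then have "0 \<le> ((1 - y) * ln (1 - y) - y * ln y) / (y * (1 - y))" using y0 by simp
      also have "((1 - y) * ln (1 - y) - y * ln y) / (y * (1 - y))
          = (1 / y) * ln (1 - y) + ln y * (- 1 / (1 - y))"
        using y0 by (simp add: field_simps)
      finally show ?thesis .
    qed
    ultimately show "\<exists>d. DERIV (\<lambda>y. ln y * ln (1 - y)) y :> d \<and> 0 \<le> d" by blast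
  next
    show "continuous_on {x..1/2} (\<lambda>y. ln y * ln (1 - y))"
      using assms by (intro continuous_intros) auto
  qed
  also have "ln (1/2::real) * ln (1 - 1/2) = (ln 2)^2"
  proof -
    have "(1 - 1/2::real) = 1/2" by simp
    moreover have "ln (1/2::real) = - ln 2" by (simp add: ln_div)
    ultimately show ?thesis by (simp add: power2_eq_square)
  qed
  finally show ?thesis .
qed

lemma ln_mult_ln_one_minus_le:
  fixes x :: real
  assumes "0 < x" "x < 1"
  shows "ln x * ln (1 - x) \<le> (ln 2)^2"
proof (cases "x \<le> 1/2")
  case True then show ?thesis using ln_mult_ln_one_minus_le_half assms by auto
next
  case False
  have "ln (1 - x) * ln (1 - (1 - x)) \<le> (ln 2)^2"
    by (rule ln_mult_ln_one_minus_le_half) (use assms False in auto)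
  then show ?thesis by (simp add: mult.commute)
qed

text \<open>With \<open>x = (1 - p) ^ (c - 1)\<close> the factor \<open>c - 1\<close> equals \<open>ln x / ln (1 - p)\<close>, so the loss is
  controlled by \<open>ln x * ln (1 - x) \<le> (ln 2)\<^sup>2\<close>.\<close>
lemma ln_hit_prob_ge:
  fixes p :: real and c :: nat
  assumes "0 < p" "p < 1" "2 \<le> c"
  shows "ln p - (ln 2)^2 / p \<le> real c * ln (1 - (1 - p) ^ (c - 1))"
proof -
  define x where "x = (1 - p) ^ (c - 1)"
  have x0: "0 < x" using assms unfolding x_def by simp
  have x1: "x \<le> 1 - p" unfolding x_def
  proof -
    have "(1 - p) ^ (c - 1) \<le> (1 - p) ^ 1" by (rule power_decreasing) (use assms in auto)
    then show "(1 - p) ^ (c - 1) \<le> 1 - p" by simp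
  qed
  have lx: "ln x = real (c - 1) * ln (1 - p)" unfolding x_def by (simp add: ln_realpow)
  have l1p: "ln (1 - p) \<le> - p" using ln_one_minus_pos_upper_bound[of p] assms by simp
  have l1pn: "ln (1 - p) < 0" using l1p assms by simp
  have A0: "ln x * ln (1 - x) \<le> (ln 2)^2" by (rule ln_mult_ln_one_minus_le) (use x0 x1 assms in auto)
  have "real c * ln (1 - x) = ln (1 - x) + real (c - 1) * ln (1 - x)"
    using assms by (simp add: of_nat_diff algebra_simps)
  also have "real (c - 1) * ln (1 - x) = ln x * ln (1 - x) / ln (1 - p)"
    using lx l1pn by (simp add: field_simps)
  finally have eq: "real c * ln (1 - x) = ln (1 - x) + ln x * ln (1 - x) / ln (1 - p)" .
  have t1: "ln p \<le> ln (1 - x)" using x1 assms by simp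
  have t2: "(ln 2)^2 / ln (1 - p) \<le> ln x * ln (1 - x) / ln (1 - p)"
    using A0 l1pn by (simp add: divide_right_mono_neg)
  have t3: "- ((ln 2)^2 / p) \<le> (ln 2)^2 / ln (1 - p)"
  proof -
    have "1 / ln (1 - p) \<ge> - 1 / p" using l1p l1pn assms by (simp add: field_simps)
    then have "(ln 2)^2 * (1 / ln (1 - p)) \<ge> (ln 2)^2 * (- 1 / p)" by (intro mult_left_mono) auto
    then show ?thesis by simp
  qed
  show ?thesis unfolding x_def[symmetric] eq using t1 t2 t3 by linarith
qed

lemma card_mult_exp_mean_le:
  fixes a :: "nat \<Rightarrow> real"
  assumes "finite R" "R \<noteq> {}"
  shows "real (card R) * exp ((\<Sum>i\<in>R. a i) / card R) \<le> (\<Sum>i\<in>R. exp (a i))"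
proof -
  define \<mu> where "\<mu> = (\<Sum>i\<in>R. a i) / card R"
  have cR: "0 < card R" using assms by (simp add: card_gt_0_iff)
  have "exp (a i) \<ge> exp \<mu> * (1 + (a i - \<mu>))" for i
  proof -
    have "exp (a i - \<mu>) \<ge> 1 + (a i - \<mu>)" by (rule exp_ge_add_one_self)
    then have "exp \<mu> * exp (a i - \<mu>) \<ge> exp \<mu> * (1 + (a i - \<mu>))" by (simp add: mult_left_mono)
    then show ?thesis by (simp add: exp_diff)
  qed
  then have "(\<Sum>i\<in>R. exp (a i)) \<ge> (\<Sum>i\<in>R. exp \<mu> * (1 + (a i - \<mu>)))" by (rule sum_mono)
  also have "(\<Sum>i\<in>R. exp \<mu> * (1 + (a i - \<mu>))) = exp \<mu> * (card R + (\<Sum>i\<in>R. a i) - card R * \<mu>)"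
    by (simp add: sum_distrib_left[symmetric] sum.distrib sum_subtractf algebra_simps)
  also have "card R * \<mu> = (\<Sum>i\<in>R. a i)" unfolding \<mu>_def using cR by simp
  finally show ?thesis unfolding \<mu>_def[symmetric] by (simp add: mult.commute)
qed

lemma power_one_minus_le_two_exp:
  fixes p :: real and c :: nat
  assumes "0 \<le> p" "p \<le> 1/2" "1 \<le> c"
  shows "(1 - p) ^ (c - 1) \<le> 2 * exp (- (p * c))"
proof -
  have "(1 - p) ^ c = (1 - p) ^ (c - 1) * (1 - p)" using power_minus_mult[of c "1 - p"] assms(3) by simp
  moreover have "0 \<le> (1 - p) ^ (c - 1) * (1 - 2 * p)" using assms(1,2) by simp
  ultimately have "(1 - p) ^ (c - 1) \<le> 2 * (1 - p) ^ c" by (simp add: algebra_simps)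
  also have "(1 - p) ^ c \<le> exp (- p) ^ c"
    using exp_ge_add_one_self[of "-p"] assms(2) by (intro power_mono) auto
  also have "exp (- p) ^ c = exp (- (p * c))"
    by (simp add: exp_of_nat_mult[symmetric] mult.commute)
  finally show ?thesis by simp
qed

lemma mult_exp_neg_le: "0 \<le> (y::real) \<Longrightarrow> y * exp (- y) \<le> 2 * exp (- y / 2)"
proof -
  assume "0 \<le> y"
  have "y \<le> 2 * exp (y / 2)" using exp_ge_add_one_self[of "y / 2"] \<open>0 \<le> y\<close> by linarith
  then have "y * exp (- y) \<le> 2 * exp (y / 2) * exp (- y)" by (simp add: mult_right_mono)
  also have "\<dots> = 2 * exp (- y / 2)" by (simp add: mult.assoc exp_add[symmetric])
  finally show ?thesis .
qed

lemma card_mult_miss_prob_le: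
  fixes p N :: real and c :: nat
  assumes p: "0 < p" "p \<le> 1/2" and N: "0 < N" and c: "1 \<le> c" and pc: "4 * ln N \<le> p * c"
  shows "real c * (1 - p) ^ (c - 1) \<le> 4 / (p * N\<^sup>2)"
proof -
  define y where "y = p * c"
  have y: "0 \<le> y" "real c = y / p" unfolding y_def using p by auto
  have "- y / 2 \<le> - 2 * ln N" using pc unfolding y_def by linarith
  then have "exp (- y / 2) \<le> exp (- 2 * ln N)" by (simp only: exp_le_cancel_iff)
  also have "\<dots> = N powr (- 2)" using N by (simp add: powr_def)
  also have "\<dots> = 1 / N\<^sup>2" using N by (simp add: powr_minus_divide powr_realpow)
  finally have decay: "exp (- y / 2) \<le> 1 / N\<^sup>2" .
  have "real c * (1 - p) ^ (c - 1) \<le> real c * (2 * exp (- y))"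
    using power_one_minus_le_two_exp[OF _ p(2) c] p unfolding y_def by (intro mult_left_mono) auto
  also have "\<dots> = 2 * (y * exp (- y)) / p" unfolding y(2) by simp
  also have "\<dots> \<le> 2 * (2 * (1 / N\<^sup>2)) / p"
    using mult_exp_neg_le[OF y(1)] decay p by (intro divide_right_mono mult_left_mono) auto
  also have "\<dots> = 4 / (p * N\<^sup>2)" by simp
  finally show ?thesis .
qed

lemma removed_le_of_budget:
  fixes eps a N T h :: real
  assumes eps: "0 < eps" "eps < 1" and "0 < a" "0 \<le> T" "0 \<le> N"
    and Tn: "(1 + a) * T \<le> (1 - eps) * N" and h: "h * 8 \<le> eps\<^sup>2 * T"
  shows "T \<le> (1 - eps) * N" and "h * 8 \<le> eps * N"
proof -
  have "T \<le> (1 + a) * T" using assms(3,4) by (simp add: mult_le_cancel_right1)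
  then show T_le: "T \<le> (1 - eps) * N" using Tn by linarith
  have "eps\<^sup>2 \<le> eps" using eps by (simp add: power2_eq_square mult_le_cancel_right1)
  then have "h * 8 \<le> eps * T" using h assms(4) by (meson mult_right_mono order_trans)
  moreover have "(1 - eps) * N \<le> N" using eps assms(5) by (simp add: mult_left_le_one_le)
  then have "eps * T \<le> eps * N" using T_le eps by (intro mult_left_mono) auto
  ultimately show "h * 8 \<le> eps * N" by linarith
qed

lemma test_budget_arith:
  fixes eps a N T s m h r c :: real
  assumes eps: "0 < eps" "eps < 1" and a: "0 < a" and pos: "0 \<le> s" "0 \<le> m" "0 \<le> h" "0 \<le> N"
    and T: "s + m \<le> T" and Tn: "(1 + a) * T \<le> (1 - eps) * N" and h: "h * 8 \<le> eps\<^sup>2 * T"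
    and r: "N - h - s \<le> r" and c: "c \<le> a * (1 + eps / 4)"
  shows "eps * N / 2 \<le> r" and "m * c \<le> (1 - eps / 2) * r"
proof -
  have T_le: "T \<le> (1 - eps) * N" and hN: "h * 8 \<le> eps * N"
    using removed_le_of_budget[OF eps a _ pos(4) Tn h] T pos by auto
  have eps_N: "0 \<le> eps * N" using eps pos by simp
  show "eps * N / 2 \<le> r" using r hN T_le T pos eps_N by (simp add: algebra_simps)
  have "m * a + s \<le> (s + m) * (1 + a)" using pos a by (simp add: algebra_simps)
  also have "\<dots> \<le> T * (1 + a)" using T a by (intro mult_right_mono) auto
  finally have A: "m * a + s \<le> (1 - eps) * N" using Tn by (simp add: mult.commute)
  have "m * c \<le> m * a * (1 + eps / 4)"
    using c pos by (simp add: mult_left_mono mult.assoc)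
  also have "\<dots> \<le> ((1 - eps) * N - s) * (1 + eps / 4)"
    using A eps by (intro mult_right_mono) auto
  also have "\<dots> \<le> (1 - eps / 2) * (N - h - s)"
  proof -
    have "(1 - eps / 2) * (N - h - s) - ((1 - eps) * N - s) * (1 + eps / 4)
        = N * (eps / 4 + eps\<^sup>2 / 4) + (3 * eps / 4) * s - (1 - eps / 2) * h"
      by (simp add: field_simps power2_eq_square)
    moreover have "(1 - eps / 2) * h \<le> h" using eps pos by (simp add: mult_left_le_one_le)
    moreover have "0 \<le> N * eps\<^sup>2 / 4" "0 \<le> (3 * eps / 4) * s" using pos eps by auto
    moreover have "h \<le> N * eps / 4" using hN eps_N by (simp add: mult.commute)
    ultimately show ?thesis by (simp add: algebra_simps)
  qed
  also have "\<dots> \<le> (1 - eps / 2) * r" using r eps by (intro mult_left_mono) auto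
  finally show "m * c \<le> (1 - eps / 2) * r" .
qed

section \<open>Masking designs\<close>

lemma truncated_card_Diff_insert:
  assumes "finite t" "i \<notin> H"
  shows "min (card (t - insert i H)) (L + 1) + (if i \<in> t \<and> card (t - H) \<le> L then 1 else 0)
    \<le> min (card (t - H)) (L + 1)"
proof (cases "i \<in> t")
  case True
  then have "i \<in> t - H" "t - insert i H = (t - H) - {i}" using assms(2) by auto
  then have "card (t - insert i H) = card (t - H) - 1" and "0 < card (t - H)"
    using assms(1) card_gt_0_iff by auto
  then show ?thesis using True by auto
next
  case False
  then have "t - insert i H = t - H" by auto
  then show ?thesis using False by simp
qed

text \<open>Choose \<open>H\<close> minimising \<open>\<Phi> H + \<Delta> * card H\<close> with \<open>\<Phi> H = (\<Sum>t. min (card (t - H)) (L + 1))\<close>: adding an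
  item lying in more than \<open>\<Delta>\<close> short tests to \<open>H\<close> would lower \<open>\<Phi>\<close> by more than \<open>\<Delta>\<close>.\<close>
lemma exists_removal_bounding_short_degree:
  fixes n :: nat and tests :: "nat set list" and L \<Delta> :: nat
  assumes sub: "set tests \<subseteq> Pow {0..<n}"
  shows "\<exists>H. H \<subseteq> {0..<n} \<and> card H * \<Delta> \<le> card (set tests) * (L + 1) \<and>
           (\<forall>i\<in>{0..<n} - H. card {t \<in> set tests. i \<in> t \<and> card (t - H) \<le> L} \<le> \<Delta>)"
proof -
  let ?V = "{0..<n}" and ?TS = "set tests"
  define \<Phi> where "\<Phi> H = (\<Sum>t\<in>?TS. min (card (t - H)) (L + 1))" for H
  define m where "m H = \<Phi> H + \<Delta> * card H" for H
  obtain H where H: "H \<subseteq> ?V" and Hmin: "\<And>H'. H' \<subseteq> ?V \<Longrightarrow> m H \<le> m H'"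
    using ex_has_least_nat[of "\<lambda>H. H \<subseteq> ?V" "{}" m] by auto
  have finH: "finite H" using H finite_subset by blast
  have tfin: "finite t" if "t \<in> ?TS" for t using sub that finite_subset by blast
  have bound: "card H * \<Delta> \<le> card ?TS * (L + 1)"
  proof -
    have "card H * \<Delta> \<le> m H" unfolding m_def by simp
    also have "\<dots> \<le> m {}" by (rule Hmin) simp
    also have "m {} = \<Phi> {}" unfolding m_def by simp
    also have "\<dots> \<le> (\<Sum>t\<in>?TS. L + 1)" unfolding \<Phi>_def by (rule sum_mono) simp
    also have "\<dots> = card ?TS * (L + 1)" by simp
    finally show ?thesis .
  qed
  have degree: "card {t \<in> ?TS. i \<in> t \<and> card (t - H) \<le> L} \<le> \<Delta>" if i: "i \<in> ?V - H" for i
  proof -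
    let ?ST = "{t \<in> ?TS. i \<in> t \<and> card (t - H) \<le> L}"
    have "\<Phi> (insert i H) + card ?ST
        = (\<Sum>t\<in>?TS. min (card (t - insert i H)) (L + 1) + (if t \<in> ?ST then 1 else 0))"
    proof -
      have "?ST = ?TS \<inter> {t. i \<in> t \<and> card (t - H) \<le> L}" by auto
      then have "card ?ST = (\<Sum>t\<in>?TS. if t \<in> ?ST then 1 else 0)" by (simp add: sum.If_cases)
      then show ?thesis unfolding \<Phi>_def by (simp add: sum.distrib)
    qed
    also have "\<dots> \<le> \<Phi> H"
      unfolding \<Phi>_def using truncated_card_Diff_insert[OF tfin, of _ i H L] i by (intro sum_mono) simp
    finally have A: "\<Phi> (insert i H) + card ?ST \<le> \<Phi> H" .
    have "m H \<le> m (insert i H)" by (rule Hmin) (use H i in auto)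
    moreover have "card (insert i H) = Suc (card H)" using i finH by simp
    ultimately have "\<Phi> H + \<Delta> * card H \<le> \<Phi> (insert i H) + \<Delta> * card H + \<Delta>" unfolding m_def by simp
    then show ?thesis using A by linarith
  qed
  show ?thesis using H bound degree by blast
qed

text \<open>Items in \<open>H\<close> are given up, and tests are measured by their part outside \<open>H\<close>. A hidden item
  is disguised unless a long test exposes it.\<close>
locale masking_design =
  fixes n :: nat and tests :: "nat set list" and p :: real and L \<Delta> :: nat and H :: "nat set"
  assumes tests_sub: "set tests \<subseteq> Pow {0..<n}"
    and p_pos: "0 < p" and p_less_1: "p < 1"
    and H_sub: "H \<subseteq> {0..<n}"
    and short_degree: "\<And>i. i \<in> {0..<n} - H \<Longrightarrow> card {t \<in> set tests. i \<in> t \<and> card (t - H) \<le> L} \<le> \<Delta>"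
begin

definition short_tests :: "nat \<Rightarrow> nat set set" where
  "short_tests i = {t \<in> set tests. i \<in> t \<and> card (t - H) \<le> L}"

definition covered :: "nat \<Rightarrow> nat set \<Rightarrow> real" where
  "covered i D = (\<Prod>t\<in>short_tests i. if (t - H - {i}) \<inter> D = {} then 0 else 1)"

definition hidden :: "nat \<Rightarrow> nat set \<Rightarrow> real" where
  "hidden i D = (if i \<in> D then 1 else 0) * covered i D"

definition num_hidden :: "nat set \<Rightarrow> real" where
  "num_hidden D = (\<Sum>i\<in>{0..<n} - H. hidden i D)"

definition exposed :: "nat set \<Rightarrow> bool" where
  "exposed D \<longleftrightarrow> (\<exists>t\<in>set tests. L < card (t - H) \<and> (\<exists>i\<in>t - H. (t - H - {i}) \<inter> D = {}))"

lemma test_finite: "t \<in> set tests \<Longrightarrow> finite t"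
  using tests_sub finite_subset by blast

lemma finite_short_tests: "finite (short_tests i)"
  unfolding short_tests_def by simp

lemma covered_cases: "covered i D = 0 \<or> covered i D = 1"
  unfolding covered_def using finite_short_tests
  by (cases "\<exists>t\<in>short_tests i. (t - H - {i}) \<inter> D = {}") auto

lemma hidden_range: "0 \<le> hidden i D \<and> hidden i D \<le> 1"
  using covered_cases[of i D] unfolding hidden_def by auto

lemma disguised_if_hidden_not_exposed:
  assumes "i \<in> {0..<n} - H" "hidden i D \<noteq> 0" "\<not> exposed D"
  shows "disguised tests D i"
  unfolding disguised_def
proof (intro conjI ballI impI)
  have "i \<in> D" and covered: "covered i D \<noteq> 0"
    using assms(2) unfolding hidden_def by (auto split: if_splits)
  then show "i \<in> D" by simp
  fix t assume t: "t \<in> set tests" "i \<in> t"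
  have "(t - H - {i}) \<inter> D \<noteq> {}"
  proof (cases "card (t - H) \<le> L")
    case True
    then have "t \<in> short_tests i" unfolding short_tests_def using t by simp
    then show ?thesis using covered finite_short_tests unfolding covered_def by auto
  next
    case False
    then show ?thesis using assms(1,3) t unfolding exposed_def by auto
  qed
  then show "\<exists>j\<in>t. j \<noteq> i \<and> j \<in> D" by auto
qed

lemma prob_no_disguised_le:
  "iid_expect p {0..<n} (\<lambda>D. if \<exists>i. disguised tests D i then 0 else 1)
   \<le> iid_expect p {0..<n} (\<lambda>D. if exposed D then 1 else 0)
     + iid_expect p {0..<n} (\<lambda>D. if num_hidden D = 0 then 1 else 0)"
proof -
  have "(if \<exists>i. disguised tests D i then 0 else 1)
      \<le> (if exposed D then 1 else 0) + (if num_hidden D = 0 then 1 else (0::real))"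
    for D
  proof (cases "exposed D \<or> num_hidden D = 0")
    case False
    then obtain i where "i \<in> {0..<n} - H" "hidden i D \<noteq> 0"
      unfolding num_hidden_def by (meson sum.neutral)
    then have "disguised tests D i" using False disguised_if_hidden_not_exposed by blast
    then show ?thesis by auto
  qed auto
  then show ?thesis
    using p_pos p_less_1 by (simp add: iid_expect_add[symmetric] iid_expect_mono)
qed


lemma prob_exposed_le:
  "iid_expect p {0..<n} (\<lambda>D. if exposed D then 1 else 0)
   \<le> (\<Sum>t\<in>{t \<in> set tests. L < card (t - H)}. real (card (t - H)) * (1 - p) ^ (card (t - H) - 1))"
proof -
  let ?V = "{0..<n}" and ?long = "{t \<in> set tests. L < card (t - H)}"
  let ?lonely = "\<lambda>t i D. if (t - H - {i}) \<inter> D = {} then 1 else (0::real)"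
  have "(if exposed D then 1 else 0) \<le> (\<Sum>t\<in>?long. \<Sum>i\<in>t - H. ?lonely t i D)" for D
  proof (cases "exposed D")
    case True
    then obtain t i where t: "t \<in> ?long" and i: "i \<in> t - H" "(t - H - {i}) \<inter> D = {}"
      unfolding exposed_def by blast
    have "(1::real) \<le> (\<Sum>i\<in>t - H. ?lonely t i D)"
      using member_le_sum[OF i(1), of "\<lambda>i. ?lonely t i D"] i(2) t test_finite by auto
    also have "\<dots> \<le> (\<Sum>t\<in>?long. \<Sum>i\<in>t - H. ?lonely t i D)"
      using t by (intro member_le_sum sum_nonneg) auto
    finally show ?thesis using True by simp
  qed (auto intro!: sum_nonneg)
  then have "iid_expect p ?V (\<lambda>D. if exposed D then 1 else 0)
      \<le> iid_expect p ?V (\<lambda>D. \<Sum>t\<in>?long. \<Sum>i\<in>t - H. ?lonely t i D)"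
    using p_pos p_less_1 by (intro iid_expect_mono) auto
  also have "\<dots> = (\<Sum>t\<in>?long. \<Sum>i\<in>t - H. (1 - p) ^ (card (t - H) - 1))"
  proof (simp only: iid_expect_sum, intro sum.cong refl)
    fix t i assume t: "t \<in> ?long" and i: "i \<in> t - H"
    have "iid_expect p ?V (?lonely t i)
        = iid_expect p ?V (\<lambda>D. if D \<inter> (t - H - {i}) = {} then 1 else 0)"
      by (simp add: Int_commute)
    also have "\<dots> = (1 - p) ^ card (t - H - {i})"
      using t tests_sub by (intro iid_expect_avoid) auto
    finally show "iid_expect p ?V (?lonely t i) = (1 - p) ^ (card (t - H) - 1)"
      using i t test_finite by simp
  qed
  finally show ?thesis by simp
qed

definition nbhd :: "nat \<Rightarrow> nat set" where
  "nbhd i = insert i (\<Union>t\<in>short_tests i. t - H)"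

definition dependent :: "nat \<Rightarrow> nat set" where
  "dependent i = {j \<in> {0..<n} - H. nbhd i \<inter> nbhd j \<noteq> {}}"

lemma hidden_local: "hidden i D = hidden i (D \<inter> nbhd i)"
proof -
  have "(t - H - {i}) \<inter> D = (t - H - {i}) \<inter> (D \<inter> nbhd i)" if "t \<in> short_tests i" for t
    using that unfolding nbhd_def by auto
  then have "covered i D = covered i (D \<inter> nbhd i)" unfolding covered_def by (intro prod.cong) auto
  moreover have "i \<in> D \<longleftrightarrow> i \<in> D \<inter> nbhd i" unfolding nbhd_def by auto
  ultimately show ?thesis unfolding hidden_def by simp
qed

lemma nbhd_sub: "i \<in> {0..<n} - H \<Longrightarrow> nbhd i \<subseteq> {0..<n} - H"
  unfolding nbhd_def short_tests_def using tests_sub by blast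

lemma finite_nbhd: "finite (nbhd i)"
proof -
  have "finite (\<Union>t\<in>short_tests i. t - H)"
    by (rule finite_UN_I[OF finite_short_tests]) (use test_finite in \<open>auto simp: short_tests_def\<close>)
  then show ?thesis unfolding nbhd_def by simp
qed

lemma card_nbhd_le:
  assumes "i \<in> {0..<n} - H"
  shows "card (nbhd i) \<le> 1 + \<Delta> * L"
proof -
  have "card (\<Union>t\<in>short_tests i. t - H) \<le> (\<Sum>t\<in>short_tests i. card (t - H))"
    by (rule card_UN_le[OF finite_short_tests])
  also have "\<dots> \<le> card (short_tests i) * L"
    using sum_bounded_above[of "short_tests i" "\<lambda>t. card (t - H)" L] by (auto simp: short_tests_def)
  also have "\<dots> \<le> \<Delta> * L"
    using short_degree[OF assms] unfolding short_tests_def by simp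
  finally have "card (\<Union>t\<in>short_tests i. t - H) \<le> \<Delta> * L" .
  moreover have "card (nbhd i) \<le> Suc (card (\<Union>t\<in>short_tests i. t - H))"
    using finite_nbhd[of i] unfolding nbhd_def by (simp add: card_insert_if)
  ultimately show ?thesis by simp
qed

text \<open>\<open>j \<in> nbhd i\<close> is a symmetric relation, so \<open>dependent i\<close> lies within distance two of \<open>i\<close>.\<close>
lemma card_dependent_le:
  assumes "i \<in> {0..<n} - H"
  shows "card (dependent i) \<le> (1 + \<Delta> * L)\<^sup>2"
proof -
  have "dependent i \<subseteq> (\<Union>x\<in>nbhd i. nbhd x)"
  proof
    fix j assume "j \<in> dependent i"
    then obtain x where x: "x \<in> nbhd i" "x \<in> nbhd j" and j: "j \<in> {0..<n} - H"
      unfolding dependent_def by auto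
    have "j \<in> nbhd x"
    proof (cases "x = j")
      case False
      then obtain t where "t \<in> short_tests j" "x \<in> t - H" using x(2) unfolding nbhd_def by auto
      then have "t \<in> short_tests x" "j \<in> t - H" using j unfolding short_tests_def by auto
      then show ?thesis unfolding nbhd_def by auto
    qed (simp add: nbhd_def)
    then show "j \<in> (\<Union>x\<in>nbhd i. nbhd x)" using x(1) by auto
  qed
  then have "card (dependent i) \<le> card (\<Union>x\<in>nbhd i. nbhd x)"
    by (intro card_mono) (auto simp: finite_nbhd)
  also have "\<dots> \<le> (\<Sum>x\<in>nbhd i. card (nbhd x))"
    by (rule card_UN_le[OF finite_nbhd])
  also have "\<dots> \<le> (\<Sum>x\<in>nbhd i. 1 + \<Delta> * L)"
    using card_nbhd_le nbhd_sub[OF assms] by (intro sum_mono) blast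
  also have "\<dots> = card (nbhd i) * (1 + \<Delta> * L)"
    by simp
  also have "\<dots> \<le> (1 + \<Delta> * L) * (1 + \<Delta> * L)"
    using card_nbhd_le[OF assms] by (rule mult_right_mono) simp
  finally show ?thesis by (simp add: power2_eq_square)
qed

lemma hidden_indep:
  assumes "i \<in> {0..<n} - H" "j \<in> {0..<n} - H - dependent i"
  shows "iid_expect p {0..<n} (\<lambda>D. hidden i D * hidden j D)
    = iid_expect p {0..<n} (hidden i) * iid_expect p {0..<n} (hidden j)"
proof (rule iid_expect_mult_indep)
  show "nbhd i \<subseteq> {0..<n}" "nbhd j \<subseteq> {0..<n}" "nbhd i \<inter> nbhd j = {}"
    using assms nbhd_sub unfolding dependent_def by blast+
qed (auto intro: hidden_local)

lemma prob_num_hidden_eq_0_le: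
  assumes "0 < iid_expect p {0..<n} num_hidden"
  shows "iid_expect p {0..<n} (\<lambda>D. if num_hidden D = 0 then 1 else 0)
    \<le> (1 + \<Delta> * L)\<^sup>2 / iid_expect p {0..<n} num_hidden"
proof -
  have "iid_expect p {0..<n} (\<lambda>D. if (\<Sum>i\<in>{0..<n} - H. hidden i D) = 0 then 1 else 0)
    \<le> real ((1 + \<Delta> * L)\<^sup>2) / iid_expect p {0..<n} (\<lambda>D. \<Sum>i\<in>{0..<n} - H. hidden i D)"
  proof (rule prob_sum_eq_0_le)
    show "dependent i \<subseteq> {0..<n} - H \<and> card (dependent i) \<le> (1 + \<Delta> * L)\<^sup>2" if "i \<in> {0..<n} - H" for i
      using card_dependent_le[OF that] unfolding dependent_def by auto
  qed (use assms p_pos p_less_1 hidden_range hidden_indep in \<open>auto simp: num_hidden_def[abs_def]\<close>)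
  then show ?thesis unfolding num_hidden_def by simp
qed


lemma expect_hidden_ge:
  assumes i: "i \<in> {0..<n} - H"
  shows "p * (\<Prod>t\<in>short_tests i. 1 - (1 - p) ^ (card (t - H) - 1)) \<le> iid_expect p {0..<n} (hidden i)"
proof -
  let ?V = "{0..<n}"
  let ?hits_all = "\<lambda>D. \<Prod>t\<in>short_tests i. if D \<inter> (t - H - {i}) = {} then 0 else (1::real)"
  have others_sub: "t - H - {i} \<subseteq> ?V - {i}" if "t \<in> short_tests i" for t
    using that tests_sub unfolding short_tests_def by auto
  have covered_local: "covered i D = covered i (D \<inter> (?V - {i}))" for D
  proof -
    have "(t - H - {i}) \<inter> D = (t - H - {i}) \<inter> (D \<inter> (?V - {i}))" if "t \<in> short_tests i" for t
      using others_sub[OF that] by auto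
    then show ?thesis unfolding covered_def by (intro prod.cong) auto
  qed
  have "iid_expect p ?V (hidden i)
      = iid_expect p ?V (\<lambda>D. if i \<in> D then 1 else 0) * iid_expect p ?V (covered i)"
    unfolding hidden_def
    by (rule iid_expect_mult_indep[of ?V "{i}" "?V - {i}"]) (use i covered_local in auto)
  also have "iid_expect p ?V (covered i) = iid_expect p (?V - {i}) (covered i)"
    by (rule iid_expect_local) (use covered_local in auto)
  also have "\<dots> = iid_expect p (?V - {i}) ?hits_all"
    unfolding covered_def by (rule iid_expect_cong) (simp add: Int_commute)
  finally have "iid_expect p ?V (hidden i) = p * iid_expect p (?V - {i}) ?hits_all"
    using i by (simp add: iid_expect_member)
  moreover have "(\<Prod>t\<in>short_tests i. 1 - (1 - p) ^ card (t - H - {i}))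
      \<le> iid_expect p (?V - {i}) ?hits_all"
    by (rule iid_expect_prod_hits_ge) (use p_pos p_less_1 finite_short_tests others_sub in auto)
  moreover have "card (t - H - {i}) = card (t - H) - 1" if "t \<in> short_tests i" for t
    using that i test_finite unfolding short_tests_def by auto
  ultimately show ?thesis using p_pos by (simp add: mult_left_mono)
qed

definition singleton_tests :: "nat set set" where
  "singleton_tests = {t \<in> set tests. card (t - H) = 1}"

definition multi_short_tests :: "nat set set" where
  "multi_short_tests = {t \<in> set tests. 2 \<le> card (t - H) \<and> card (t - H) \<le> L}"

definition candidates :: "nat set" where
  "candidates = {i \<in> {0..<n} - H. \<forall>t\<in>short_tests i. 2 \<le> card (t - H)}"

lemma card_singleton_tests_add_multi_short_tests_le:
  "card singleton_tests + card multi_short_tests \<le> card (set tests)"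
proof -
  have "card singleton_tests + card multi_short_tests = card (singleton_tests \<union> multi_short_tests)"
    by (rule card_Un_disjoint[symmetric]) (auto simp: singleton_tests_def multi_short_tests_def)
  also have "\<dots> \<le> card (set tests)"
    by (rule card_mono) (auto simp: singleton_tests_def multi_short_tests_def)
  finally show ?thesis .
qed

text \<open>Each non-candidate outside \<open>H\<close> is the only item outside \<open>H\<close> of one of the singleton tests.\<close>
lemma card_le_candidates_add_singleton_tests:
  "card ({0..<n} - H) \<le> card candidates + card singleton_tests"
proof -
  let ?rest = "({0..<n} - H) - candidates"
  have witness: "\<exists>t\<in>singleton_tests. t - H = {i}" if i: "i \<in> ?rest" for i
  proof -
    obtain t where t: "t \<in> set tests" "i \<in> t" "card (t - H) < 2"
      using i unfolding candidates_def short_tests_def by auto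
    have "i \<in> t - H" using t i by auto
    then have "0 < card (t - H)" using test_finite[OF t(1)] card_gt_0_iff by blast
    then have card_1: "card (t - H) = 1" using t(3) by linarith
    then obtain x where "t - H = {x}" by (rule card_1_singletonE)
    then have "t - H = {i}" using \<open>i \<in> t - H\<close> by simp
    then show ?thesis using t(1) card_1 unfolding singleton_tests_def by auto
  qed
  then obtain g where g: "\<And>i. i \<in> ?rest \<Longrightarrow> g i \<in> singleton_tests \<and> g i - H = {i}"
    by metis
  have "inj_on g ?rest"
    by (rule inj_onI) (metis g singleton_inject)
  moreover have "g ` ?rest \<subseteq> singleton_tests" using g by auto
  ultimately have "card ?rest \<le> card singleton_tests"
    by (rule card_inj_on_le) (simp add: singleton_tests_def)
  moreover have "card ?rest = card ({0..<n} - H) - card candidates"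
    by (rule card_Diff_subset) (auto simp: candidates_def)
  ultimately show ?thesis by simp
qed

definition log_hit_prob :: "nat set \<Rightarrow> real" where
  "log_hit_prob t = ln (1 - (1 - p) ^ (card (t - H) - 1))"

lemma hit_prob_pos: "2 \<le> c \<Longrightarrow> 0 < 1 - (1 - p) ^ (c - 1)"
  using p_pos p_less_1 by (simp add: power_less_one_iff)

lemma expect_num_hidden_ge_sum_exp:
  "p * (\<Sum>i\<in>candidates. exp (\<Sum>t\<in>short_tests i. log_hit_prob t)) \<le> iid_expect p {0..<n} num_hidden"
proof -
  have "exp (\<Sum>t\<in>short_tests i. log_hit_prob t) = (\<Prod>t\<in>short_tests i. 1 - (1 - p) ^ (card (t - H) - 1))"
    if "i \<in> candidates" for i
    using that hit_prob_pos unfolding candidates_def log_hit_prob_def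
    by (simp add: exp_sum[OF finite_short_tests])
  then have "p * (\<Sum>i\<in>candidates. exp (\<Sum>t\<in>short_tests i. log_hit_prob t))
      = (\<Sum>i\<in>candidates. p * (\<Prod>t\<in>short_tests i. 1 - (1 - p) ^ (card (t - H) - 1)))"
    by (simp add: sum_distrib_left)
  also have "\<dots> \<le> (\<Sum>i\<in>{0..<n} - H. p * (\<Prod>t\<in>short_tests i. 1 - (1 - p) ^ (card (t - H) - 1)))"
    using p_pos p_less_1
    by (intro sum_mono2) (auto simp: candidates_def intro!: mult_nonneg_nonneg prod_nonneg power_le_one)
  also have "\<dots> \<le> (\<Sum>i\<in>{0..<n} - H. iid_expect p {0..<n} (hidden i))"
    by (intro sum_mono expect_hidden_ge)
  also have "\<dots> = iid_expect p {0..<n} num_hidden"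
    unfolding num_hidden_def by (simp add: iid_expect_sum)
  finally show ?thesis .
qed


lemma sum_log_hit_prob_ge:
  "card multi_short_tests * (ln p - (ln 2)\<^sup>2 / p) \<le> (\<Sum>i\<in>candidates. \<Sum>t\<in>short_tests i. log_hit_prob t)"
proof -
  let ?T = "multi_short_tests"
  have short_tests_eq: "short_tests i = {t \<in> ?T. i \<in> t}" if "i \<in> candidates" for i
    using that unfolding candidates_def short_tests_def multi_short_tests_def by auto
  have log_hit_prob_nonpos: "log_hit_prob t \<le> 0" if "t \<in> ?T" for t
    using that hit_prob_pos p_pos p_less_1 unfolding log_hit_prob_def multi_short_tests_def by simp
  have "card ?T * (ln p - (ln 2)\<^sup>2 / p) \<le> (\<Sum>t\<in>?T. card (t - H) * log_hit_prob t)"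
    unfolding sum_constant[symmetric] using ln_hit_prob_ge p_pos p_less_1
    by (intro sum_mono) (auto simp: multi_short_tests_def log_hit_prob_def)
  also have "\<dots> = (\<Sum>t\<in>?T. \<Sum>i\<in>{0..<n} - H. if i \<in> t then log_hit_prob t else 0)"
  proof (rule sum.cong[OF refl])
    fix t assume "t \<in> ?T"
    then have "({0..<n} - H) \<inter> {i. i \<in> t} = t - H"
      using tests_sub unfolding multi_short_tests_def by auto
    then show "card (t - H) * log_hit_prob t = (\<Sum>i\<in>{0..<n} - H. if i \<in> t then log_hit_prob t else 0)"
      by (simp add: sum.If_cases)
  qed
  also have "\<dots> = (\<Sum>i\<in>{0..<n} - H. \<Sum>t\<in>?T. if i \<in> t then log_hit_prob t else 0)"
    by (rule sum.swap)
  also have "\<dots> \<le> (\<Sum>i\<in>candidates. \<Sum>t\<in>?T. if i \<in> t then log_hit_prob t else 0)"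
  proof -
    have "(\<Sum>i\<in>({0..<n} - H) - candidates. \<Sum>t\<in>?T. if i \<in> t then log_hit_prob t else 0) \<le> 0"
      using log_hit_prob_nonpos by (intro sum_nonpos) auto
    moreover have "candidates \<subseteq> {0..<n} - H" unfolding candidates_def by auto
    ultimately show ?thesis by (simp add: sum.subset_diff[of candidates])
  qed
  also have "\<dots> = (\<Sum>i\<in>candidates. \<Sum>t\<in>short_tests i. log_hit_prob t)"
  proof (rule sum.cong[OF refl])
    fix i assume "i \<in> candidates"
    have "finite ?T" unfolding multi_short_tests_def by simp
    then show "(\<Sum>t\<in>?T. if i \<in> t then log_hit_prob t else 0) = (\<Sum>t\<in>short_tests i. log_hit_prob t)"
      unfolding short_tests_eq[OF \<open>i \<in> candidates\<close>] by (simp add: sum.inter_filter)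
  qed
  finally show ?thesis .
qed

lemma expect_num_hidden_ge:
  assumes "candidates \<noteq> {}"
  shows "p * card candidates * exp (card multi_short_tests * (ln p - (ln 2)\<^sup>2 / p) / card candidates)
    \<le> iid_expect p {0..<n} num_hidden"
proof -
  let ?R = "candidates"
  have "finite ?R" unfolding candidates_def by simp
  then have card_pos: "0 < real (card ?R)" using assms by (simp add: card_gt_0_iff)
  have "card ?R * exp (card multi_short_tests * (ln p - (ln 2)\<^sup>2 / p) / card ?R)
      \<le> card ?R * exp ((\<Sum>i\<in>?R. \<Sum>t\<in>short_tests i. log_hit_prob t) / card ?R)"
    using sum_log_hit_prob_ge card_pos by (simp add: divide_right_mono)
  also have "\<dots> \<le> (\<Sum>i\<in>?R. exp (\<Sum>t\<in>short_tests i. log_hit_prob t))"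
    by (rule card_mult_exp_mean_le[OF \<open>finite ?R\<close> assms])
  finally have "p * (card ?R * exp (card multi_short_tests * (ln p - (ln 2)\<^sup>2 / p) / card ?R))
      \<le> p * (\<Sum>i\<in>?R. exp (\<Sum>t\<in>short_tests i. log_hit_prob t))"
    using p_pos by (simp add: mult_left_mono)
  then show ?thesis
    using expect_num_hidden_ge_sum_exp by (simp add: mult.assoc)
qed


lemma prob_exposed_le_inverse:
  assumes "p \<le> 1/2" "0 < n" "4 * ln n \<le> p * L" "card (set tests) \<le> n"
  shows "iid_expect p {0..<n} (\<lambda>D. if exposed D then 1 else 0) \<le> 4 / (p * n)"
proof -
  let ?long = "{t \<in> set tests. L < card (t - H)}"
  have "iid_expect p {0..<n} (\<lambda>D. if exposed D then 1 else 0)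
      \<le> (\<Sum>t\<in>?long. real (card (t - H)) * (1 - p) ^ (card (t - H) - 1))"
    by (rule prob_exposed_le)
  also have "\<dots> \<le> (\<Sum>t\<in>?long. 4 / (p * (real n)\<^sup>2))"
  proof (rule sum_mono)
    fix t assume t: "t \<in> ?long"
    have "real L \<le> card (t - H)" using t by simp
    then have "4 * ln n \<le> p * card (t - H)"
      using assms(3) mult_left_mono[OF _ less_imp_le[OF p_pos]] by (meson order_trans)
    then show "real (card (t - H)) * (1 - p) ^ (card (t - H) - 1) \<le> 4 / (p * (real n)\<^sup>2)"
      using t p_pos assms(1,2) by (intro card_mult_miss_prob_le) auto
  qed
  also have "\<dots> = card ?long * (4 / (p * (real n)\<^sup>2))"
    by simp
  also have "\<dots> \<le> n * (4 / (p * (real n)\<^sup>2))"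
    using p_pos card_mono[of "set tests" ?long] assms(4) by (intro mult_right_mono) auto
  also have "\<dots> = 4 / (p * n)"
    by (simp add: power2_eq_square)
  finally show ?thesis .
qed

lemma success_prob_le:
  assumes "0 < iid_expect p {0..<n} num_hidden"
  shows "success_prob p n tests dec \<le> iid_expect p {0..<n} (\<lambda>D. if exposed D then 1 else 0)
    + (1 + \<Delta> * L)\<^sup>2 / iid_expect p {0..<n} num_hidden + p / (1 - p)"
  using success_prob_le_no_disguised[OF p_pos p_less_1, of n tests dec] prob_no_disguised_le
    prob_num_hidden_eq_0_le[OF assms] by linarith

lemma expect_num_hidden_ge_powr:
  assumes "0 < eps" "0 < N" "eps * N / 2 \<le> card candidates"
    and "card multi_short_tests * ((ln 2)\<^sup>2 / p - ln p) \<le> (1 - eps / 2) * card candidates * ln N"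
  shows "eps / 2 * p * N powr (eps / 2) \<le> iid_expect p {0..<n} num_hidden"
proof -
  let ?R = "real (card candidates)"
  have "0 < eps * N / 2" using assms(1,2) by simp
  then have R_pos: "0 < ?R" using assms(3) by linarith
  have exponent: "- (1 - eps / 2) * ln N \<le> card multi_short_tests * (ln p - (ln 2)\<^sup>2 / p) / ?R"
    using assms(4) R_pos by (simp add: field_simps)
  have "eps / 2 * p * N powr (eps / 2) = p * (eps * N / 2) * N powr (- (1 - eps / 2))"
    using assms(2) by (simp add: powr_add[symmetric] powr_minus_divide field_simps)
  also have "\<dots> \<le> p * ?R * exp (- (1 - eps / 2) * ln N)"
    using assms(3) p_pos assms(2) by (simp add: powr_def mult_right_mono)
  also have "\<dots> \<le> p * ?R * exp (card multi_short_tests * (ln p - (ln 2)\<^sup>2 / p) / ?R)"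
    using exponent p_pos R_pos by (intro mult_left_mono) auto
  also have "\<dots> \<le> iid_expect p {0..<n} num_hidden"
    using R_pos by (intro expect_num_hidden_ge) auto
  finally show ?thesis .
qed


lemma expect_num_hidden_ge_under_budget:
  fixes eps a :: real
  assumes eps: "0 < eps" "eps < 1" and a: "0 < a" and n: "2 \<le> n"
    and H_small: "real (card H) * 8 \<le> eps\<^sup>2 * card (set tests)"
    and budget: "(1 + a) * card (set tests) \<le> (1 - eps) * n"
    and cost: "(ln 2)\<^sup>2 / p - ln p \<le> (1 + eps / 4) * a * ln n"
  shows "eps / 2 * p * n powr (eps / 2) \<le> iid_expect p {0..<n} num_hidden"
proof -
  have n_pos: "0 < real n" and ln_pos: "0 < ln n" using n by auto
  have "card ({0..<n} - H) = n - card H" and "card H \<le> n"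
    using H_sub by (auto simp: card_Diff_subset finite_subset dest: card_mono[rotated])
  then have rest: "real n - card H - card singleton_tests \<le> card candidates"
    using card_le_candidates_add_singleton_tests by linarith
  define c where "c = ((ln 2)\<^sup>2 / p - ln p) / ln n"
  have "c \<le> a * (1 + eps / 4)" using cost ln_pos unfolding c_def by (simp add: field_simps)
  moreover have "real (card singleton_tests) + card multi_short_tests \<le> card (set tests)"
    using card_singleton_tests_add_multi_short_tests_le by (metis of_nat_add of_nat_le_iff)
  ultimately have "eps * n / 2 \<le> card candidates"
    and "card multi_short_tests * c \<le> (1 - eps / 2) * card candidates"
    using test_budget_arith[where N = "real n" and T = "card (set tests)" and s = "card singleton_tests"
        and m = "card multi_short_tests" and h = "card H" and r = "card candidates"]
      eps a budget H_small rest
    by auto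
  moreover from this(2) have
    "card multi_short_tests * ((ln 2)\<^sup>2 / p - ln p) \<le> (1 - eps / 2) * card candidates * ln n"
    using mult_right_mono[of _ _ "ln n"] ln_pos unfolding c_def by fastforce
  ultimately show ?thesis
    by (intro expect_num_hidden_ge_powr eps n_pos)
qed

end

section \<open>The regime p = lam / ln n\<close>

lemma removed_count_le:
  fixes h T K0 L :: nat and eps :: real
  assumes "h * (K0 * (L + 1)) \<le> T * (L + 1)" "8 / eps\<^sup>2 \<le> K0" "0 < eps"
  shows "real h * 8 \<le> eps\<^sup>2 * T"
proof -
  have "h * K0 \<le> T" using assms(1) by (simp only: mult.assoc[symmetric] mult_le_cancel2)
  then have hK: "real h * K0 \<le> T" by (metis of_nat_le_iff of_nat_mult)
  have "8 \<le> K0 * eps\<^sup>2" using assms(2,3) by (simp add: field_simps)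
  then have "real h * 8 \<le> real h * K0 * eps\<^sup>2"
    by (simp add: mult_left_mono mult.assoc)
  also have "\<dots> \<le> T * eps\<^sup>2"
    using hK by (rule mult_right_mono) simp
  finally show ?thesis by (simp add: mult.commute)
qed

lemma success_prob_le_under_budget:
  fixes p a eps :: real and n L K0 :: nat
  assumes p: "0 < p" "p \<le> 1/2" and eps: "0 < eps" "eps < 1" and a: "0 < a" and n: "2 \<le> n"
    and L: "4 * ln n \<le> p * L" and K0: "8 / eps\<^sup>2 \<le> K0"
    and cost: "(ln 2)\<^sup>2 / p - ln p \<le> (1 + eps / 4) * a * ln n"
    and tests: "set tests \<subseteq> Pow {0..<n}" and len: "(1 + a) * length tests \<le> (1 - eps) * n"
  shows "success_prob p n tests dec
    \<le> 4 / (p * n) + (1 + K0 * (L + 1) * L)\<^sup>2 / (eps / 2 * p * n powr (eps / 2)) + p / (1 - p)"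
proof -
  define \<Delta> where "\<Delta> = K0 * (L + 1)"
  obtain H where H: "H \<subseteq> {0..<n}" and card_H: "card H * \<Delta> \<le> card (set tests) * (L + 1)"
    and degree: "\<forall>i\<in>{0..<n} - H. card {t \<in> set tests. i \<in> t \<and> card (t - H) \<le> L} \<le> \<Delta>"
    using exists_removal_bounding_short_degree[OF tests] by blast
  interpret masking_design n tests p L \<Delta> H
    using tests p H degree by unfold_locales auto
  let ?T = "real (card (set tests))"
  have "?T \<le> length tests" by (simp add: card_length)
  then have budget: "(1 + a) * ?T \<le> (1 - eps) * n"
    using order_trans[OF mult_left_mono len] a by simp
  then have "?T + a * ?T \<le> n - eps * n" by (simp add: algebra_simps)
  moreover have "0 \<le> a * ?T" "0 \<le> eps * n" using a eps by simp_all
  ultimately have "?T \<le> n" by linarith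
  have H_small: "real (card H) * 8 \<le> eps\<^sup>2 * ?T"
    using card_H K0 eps(1) unfolding \<Delta>_def by (rule removed_count_le)
  have hidden: "eps / 2 * p * n powr (eps / 2) \<le> iid_expect p {0..<n} num_hidden"
    by (rule expect_num_hidden_ge_under_budget[OF eps a n H_small budget cost])
  moreover have "0 < eps / 2 * p * n powr (eps / 2)" using eps p n by simp
  ultimately have "0 < iid_expect p {0..<n} num_hidden" by linarith
  moreover have "(1 + \<Delta> * L)\<^sup>2 / iid_expect p {0..<n} num_hidden
      \<le> (1 + \<Delta> * L)\<^sup>2 / (eps / 2 * p * n powr (eps / 2))"
    using hidden \<open>0 < eps / 2 * p * n powr (eps / 2)\<close> by (intro divide_left_mono) auto
  moreover have "iid_expect p {0..<n} (\<lambda>D. if exposed D then 1 else 0) \<le> 4 / (p * n)"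
    using \<open>?T \<le> n\<close> n by (intro prob_exposed_le_inverse p(2) L) auto
  ultimately show ?thesis
    using success_prob_le[of dec] unfolding \<Delta>_def by linarith
qed

definition success_bound :: "real \<Rightarrow> real \<Rightarrow> real \<Rightarrow> real" where
  "success_bound lam eps x = 4 * ln x / (lam * x)
     + (1 + (8 / eps\<^sup>2 + 1) * (4 * (ln x)\<^sup>2 / lam + 2)\<^sup>2)\<^sup>2 * (2 * ln x) / (eps * lam * x powr (eps / 2))
     + 2 * lam / ln x"

lemma success_bound_tendsto_0:
  assumes "0 < lam" "0 < eps"
  shows "(success_bound lam eps \<longlongrightarrow> 0) at_top"
proof -
  have first: "((\<lambda>x. 4 * ln x / (lam * x)) \<longlongrightarrow> 0) at_top"
    using assms by real_asymp
  have middle: "((\<lambda>x. (1 + K * (4 * (ln x)\<^sup>2 / lam + 2)\<^sup>2)\<^sup>2 * (2 * ln x)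
      / (eps * lam * x powr (eps / 2))) \<longlongrightarrow> 0) at_top" if "0 < K" for K
    using that assms by real_asymp
  have last: "((\<lambda>x. 2 * lam / ln x) \<longlongrightarrow> 0) at_top"
    using assms by real_asymp
  have "0 < 8 / eps\<^sup>2 + 1" by (intro add_nonneg_pos) simp_all
  from tendsto_add[OF tendsto_add[OF first middle[OF this]] last] show ?thesis
    unfolding success_bound_def[abs_def] by simp
qed

lemma sq_one_add_mult_le:
  fixes K0 L :: nat and K x :: real
  assumes "K0 \<le> K" "x \<le> L" "L \<le> x + 1" "0 \<le> x"
  shows "real ((1 + K0 * (L + 1) * L)\<^sup>2) \<le> (1 + K * (x + 2)\<^sup>2)\<^sup>2"
proof -
  have "real K0 * ((real L + 1) * real L) \<le> K * ((x + 2) * (x + 2))"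
    using assms by (intro mult_mono) auto
  then have "(1 + real K0 * ((real L + 1) * real L))\<^sup>2 \<le> (1 + K * (x + 2)\<^sup>2)\<^sup>2"
    by (intro power_mono) (auto simp: power2_eq_square)
  then show ?thesis by (simp add: algebra_simps)
qed

lemma budget_of_test_count:
  fixes lam eps T N :: real
  assumes "0 < lam" "T \<le> (1 - eps) * (lam / (lam + (ln 2)\<^sup>2)) * N"
  shows "(1 + (ln 2)\<^sup>2 / lam) * T \<le> (1 - eps) * N"
proof -
  have "1 + (ln 2)\<^sup>2 / lam = (lam + (ln 2)\<^sup>2) / lam" using assms(1) by (simp add: field_simps)
  moreover have "0 < lam + (ln 2)\<^sup>2" using assms(1) by (simp add: add_pos_nonneg)
  ultimately have rate: "(1 + (ln 2)\<^sup>2 / lam) * (lam / (lam + (ln 2)\<^sup>2)) = 1"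
    using assms(1) by simp
  have "(1 + (ln 2)\<^sup>2 / lam) * T \<le> (1 + (ln 2)\<^sup>2 / lam) * ((1 - eps) * (lam / (lam + (ln 2)\<^sup>2)) * N)"
    using assms by (intro mult_left_mono) auto
  also have "\<dots> = ((1 + (ln 2)\<^sup>2 / lam) * (lam / (lam + (ln 2)\<^sup>2))) * ((1 - eps) * N)"
    by (simp only: mult_ac)
  finally show ?thesis unfolding rate by simp
qed

lemma test_cost_le:
  fixes lam eps y :: real
  assumes "0 < lam" "0 < y" "(ln y - ln lam) / y \<le> (ln 2)\<^sup>2 / lam * eps / 4"
  shows "(ln 2)\<^sup>2 / (lam / y) - ln (lam / y) \<le> (1 + eps / 4) * ((ln 2)\<^sup>2 / lam) * y"
proof -
  have "ln y - ln lam \<le> (ln 2)\<^sup>2 / lam * eps / 4 * y"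
    using assms(2,3) by (simp add: pos_divide_le_eq)
  moreover have "(ln 2)\<^sup>2 / (lam / y) - ln (lam / y) = (ln 2)\<^sup>2 / lam * y + (ln y - ln lam)"
    using assms(1,2) by (simp add: ln_div)
  moreover have "(1 + eps / 4) * ((ln 2)\<^sup>2 / lam) * y
      = (ln 2)\<^sup>2 / lam * y + (ln 2)\<^sup>2 / lam * eps / 4 * y"
    using assms(1) by (simp add: field_simps)
  ultimately show ?thesis by linarith
qed

lemma success_prob_le_success_bound:
  fixes lam eps :: real and n :: nat
  assumes lam: "0 < lam" and eps: "0 < eps" "eps < 1" and n: "3 \<le> n"
    and p_half: "lam / ln n \<le> 1/2"
    and log_ratio: "(ln (ln n) - ln lam) / ln n \<le> (ln 2)\<^sup>2 / lam * eps / 4"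
    and tests: "set tests \<subseteq> Pow {0..<n}"
    and len: "real (length tests) \<le> (1 - eps) * (lam / (lam + (ln 2)\<^sup>2)) * real n"
  shows "success_prob (lam / ln n) n tests dec \<le> success_bound lam eps n"
proof -
  define p x where "p = lam / ln n" and "x = 4 * (ln n)\<^sup>2 / lam"
  define L K0 where "L = nat \<lceil>x\<rceil>" and "K0 = nat \<lceil>8 / eps\<^sup>2\<rceil>"
  have ln_pos: "0 < ln n" and n_pos: "0 < real n" using n by auto
  have p_pos: "0 < p" and p_le: "p \<le> 1/2" and x_nonneg: "0 \<le> x"
    using lam ln_pos p_half unfolding p_def x_def by auto
  have L: "x \<le> L" "L \<le> x + 1" and K0: "8 / eps\<^sup>2 \<le> K0" "K0 \<le> 8 / eps\<^sup>2 + 1"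
    unfolding L_def K0_def using x_nonneg eps real_nat_ceiling_ge of_int_ceiling_le_add_one
    by (simp_all add: real_nat_ceiling_ge)
  have "p * x = 4 * ln n"
    unfolding p_def x_def using lam ln_pos by (simp add: field_simps power2_eq_square)
  then have L_large: "4 * ln n \<le> p * L" using L p_pos by (metis mult_left_mono less_imp_le)
  have cost: "(ln 2)\<^sup>2 / p - ln p \<le> (1 + eps / 4) * ((ln 2)\<^sup>2 / lam) * ln n"
    using test_cost_le[OF lam ln_pos log_ratio] unfolding p_def .
  have "success_prob p n tests dec
      \<le> 4 / (p * n) + (1 + K0 * (L + 1) * L)\<^sup>2 / (eps / 2 * p * n powr (eps / 2)) + p / (1 - p)"
    using n lam by (intro success_prob_le_under_budget[OF p_pos p_le eps _ _ L_large K0(1) cost tests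
        budget_of_test_count[OF lam len]]) auto
  moreover have "4 / (p * n) = 4 * ln n / (lam * n)" unfolding p_def by simp
  moreover have "p / (1 - p) \<le> 2 * lam / ln n"
  proof -
    have "p / (1 - p) \<le> p / (1/2)" using p_pos p_le by (intro divide_left_mono) auto
    then show ?thesis unfolding p_def by (simp add: mult.commute)
  qed
  moreover have "(1 + K0 * (L + 1) * L)\<^sup>2 / (eps / 2 * p * n powr (eps / 2))
      \<le> (1 + (8 / eps\<^sup>2 + 1) * (x + 2)\<^sup>2)\<^sup>2 * (2 * ln n) / (eps * lam * n powr (eps / 2))"
  proof -
    have "(1 + K0 * (L + 1) * L)\<^sup>2 / (eps / 2 * p * n powr (eps / 2))
        \<le> (1 + (8 / eps\<^sup>2 + 1) * (x + 2)\<^sup>2)\<^sup>2 / (eps / 2 * p * n powr (eps / 2))"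
      using sq_one_add_mult_le[OF K0(2) L x_nonneg] eps p_pos n_pos by (intro divide_right_mono) auto
    also have "\<dots> = (1 + (8 / eps\<^sup>2 + 1) * (x + 2)\<^sup>2)\<^sup>2 * (2 * ln n) / (eps * lam * n powr (eps / 2))"
      unfolding p_def using ln_pos lam by (simp add: field_simps)
    finally show ?thesis .
  qed
  ultimately show ?thesis unfolding success_bound_def x_def p_def by linarith
qed

lemma eventually_error_prob_ge:
  fixes lam eps \<delta> :: real
  assumes "0 < lam" "0 < eps" "eps < 1" "0 < \<delta>"
  shows "\<forall>\<^sub>F n in sequentially. \<forall>tests dec. set tests \<subseteq> Pow {0..<n} \<and>
    real (length tests) \<le> (1 - eps) * (lam / (lam + (ln 2)\<^sup>2)) * real n
    \<longrightarrow> error_prob (lam / ln (real n)) n tests dec \<ge> 1 - \<delta>"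
proof -
  have "0 < (ln 2)\<^sup>2 / lam * eps / 4" using assms by simp
  then have "\<forall>\<^sub>F x in at_top. 3 \<le> x \<and> lam / ln x \<le> 1/2
      \<and> (ln (ln x) - ln lam) / ln x \<le> (ln 2)\<^sup>2 / lam * eps / 4 \<and> success_bound lam eps x < \<delta>"
    using assms order_tendstoD(2)[OF success_bound_tendsto_0 assms(4)]
    by (intro eventually_conj) real_asymp+
  then have "\<forall>\<^sub>F n in sequentially. 3 \<le> real n \<and> lam / ln n \<le> 1/2
      \<and> (ln (ln n) - ln lam) / ln n \<le> (ln 2)\<^sup>2 / lam * eps / 4 \<and> success_bound lam eps n < \<delta>"
    by (rule eventually_compose_filterlim[OF _ filterlim_real_sequentially])
  then show ?thesis
  proof eventually_elim
    case (elim n)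
    show ?case
    proof (intro allI impI, elim conjE)
      fix tests dec
      assume "set tests \<subseteq> Pow {0..<n}"
        and "real (length tests) \<le> (1 - eps) * (lam / (lam + (ln 2)\<^sup>2)) * real n"
      then have "success_prob (lam / ln n) n tests dec \<le> success_bound lam eps n"
        using elim assms by (intro success_prob_le_success_bound) auto
      then show "error_prob (lam / ln n) n tests dec \<ge> 1 - \<delta>"
        using elim unfolding error_prob_def by linarith
    qed
  qed
qed

theorem theorem3:
  fixes lam eps :: real
  assumes "lam > 0" and "0 < eps" and "eps < 1"
  shows "\<forall>\<delta>>0. \<exists>n0::nat. \<forall>n>n0. \<forall>(tests :: nat set list) (dec :: bool list \<Rightarrow> nat set).
           set tests \<subseteq> Pow {0..<n} \<and>
           real (length tests) \<le> (1 - eps) * (lam / (lam + (ln 2)^2)) * real n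
           \<longrightarrow> error_prob (lam / ln (real n)) n tests dec \<ge> 1 - \<delta>"
  using eventually_error_prob_ge[OF assms] unfolding eventually_at_top_dense by blast

end
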